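(* Let $x$ be a host whose flow cardinality is $N(x)$ and whose true subnet cardinality with respect to a targeted subnet of prefix length $l$ is $C(x)$, with $N(x)>C(x)$. Let $G$ be the IP segment width and $r=\lfloor l/G\rfloor$, with $r,G$ positive integers and $rG<32$. Let $\hat{C}_{full}(x)$ and $\hat{C}_{host}(x)$ be the estimated subnet cardinalities obtained by hashing full IP addresses and by hashing only host addresses, respectively, whose expected estimation errors are $$\mathbb{E}\left[|\hat{C}_{full}(x)-C(x)|\right]=2^{32}\left[1-\left(1-2^{-32}\right)^{N(x)-C(x)}\right],$$ $$\mathbb{E}\left[|\hat{C}_{host}(x)-C(x)|\right]=2^{32-rG}\left[1-\left(1-2^{rG-32}\right)^{(N(x)-C(x))(1/2)^{r}}\right].$$ Then $$\mathbb{E}\left[|\hat{C}_{full}(x)-C(x)|\right]>\mathbb{E}\left[|\hat{C}_{host}(x)-C(x)|\right].$$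
   Context: Setting: a host $x$ communicates with $N(x)$ distinct peers (32-bit IP addresses), $C(x)$ of which lie in a targeted subnet with prefix length $l$. Under the halved-segment hashing strategy, addresses are split into $G$-bit segments; a peer outside the subnet is mistakenly inferred to share the subnet prefix with probability $(1/2)^{\lfloor l/G\rfloor}$. Full-address hashing hashes entire addresses into a bitmap of size $2^{32}$ and all $N(x)-C(x)$ outside peers contaminate the count; host-address hashing hashes only the last $32-\lfloor l/G\rfloor G$ bits into a bitmap of size $2^{32-\lfloor l/G\rfloor G}$ and only the misinferred outside peers, expected number $(N(x)-C(x))(1/2)^{\lfloor l/G\rfloor}$, contaminate the count. With bitmap size $M$ and $U$ contaminating flows hashed independently and uniformly, the expected estimation error is $M[1-(1-M^{-1})^U]$, which gives the two displayed formulas. *)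

theory Defs
  imports Complex_Main
begin

end

theory Submission
  imports Defs
begin

text \<open>The expected error \<open>M (1 - (1 - 1/M)^U)\<close> of a bitmap of size \<open>M\<close> loaded with \<open>U\<close>
  contaminating flows is strictly increasing in the load \<open>U\<close>, and for integral \<open>U\<close> it is the
  geometric sum \<open>\<Sum>i<U. (1 - 1/M)^i\<close>, hence increasing in \<open>M\<close>. Host-address hashing both
  shrinks the bitmap and thins out the load, so each change can only lower the error, and
  the second change is strict.\<close>

definition bitmap_error :: "real \<Rightarrow> real \<Rightarrow> real" where
  "bitmap_error M U = M * (1 - (1 - 1 / M) powr U)"

lemma bitmap_error_of_nat:
  assumes "M > 1"
  shows "bitmap_error M (real n) = (\<Sum>i<n. (1 - 1 / M) ^ i)"
proof -
  have "(1 - 1 / M) powr real n = (1 - 1 / M) ^ n"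
    using assms by (intro powr_realpow) simp
  moreover have "M * (1 - (1 - 1 / M)) = 1"
    using assms by simp
  ultimately show ?thesis
    unfolding bitmap_error_def using assms by (simp add: one_diff_power_eq flip: mult.assoc)
qed

lemma bitmap_error_strict_mono_load:
  assumes "M > 1" and "U < V"
  shows "bitmap_error M U < bitmap_error M V"
proof -
  have "(1 - 1 / M) powr V < (1 - 1 / M) powr U"
    using assms by (intro powr_less_mono') simp_all
  then show ?thesis
    unfolding bitmap_error_def using assms(1) by simp
qed

lemma bitmap_error_mono_size:
  assumes "M > 1" and "M \<le> M'"
  shows "bitmap_error M (real n) \<le> bitmap_error M' (real n)"
proof -
  have "1 - 1 / M \<le> 1 - 1 / M'"
    using assms by (simp add: frac_le)
  moreover have "0 \<le> 1 - 1 / M"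
    using assms by simp
  ultimately show ?thesis
    using assms by (simp add: bitmap_error_of_nat sum_mono power_mono)
qed

theorem theorem2:
  fixes N C l G r :: nat and E_full E_host :: real
  assumes "N > C"
    and "G > 0" and "r > 0" and "r = l div G" and "r * G < 32"
    and "E_full = 2 ^ 32 * (1 - (1 - 2 powr (-32)) ^ (N - C))"
    and "E_host = 2 ^ (32 - r * G) *
           (1 - (1 - 2 powr (real (r * G) - 32)) powr (real (N - C) * (1 / 2) ^ r))"
  shows "E_full > E_host"
proof -
  define M :: real where "M = 2 ^ (32 - r * G)"
  have "M \<ge> 2"
    using assms(5) by (simp add: M_def self_le_power)
  have "M \<le> 2 ^ 32"
    unfolding M_def by (rule power_increasing) simp_all
  have "M = 2 powr (32 - real (r * G))"
    using assms(5) by (simp add: M_def of_nat_diff flip: powr_realpow)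
  then have "1 / M = 2 powr (real (r * G) - 32)"
    by (simp flip: powr_minus_divide)
  then have "E_host = bitmap_error M (real (N - C) * (1 / 2) ^ r)"
    using assms(7) by (simp add: bitmap_error_def M_def)
  also have "\<dots> < bitmap_error M (real (N - C))"
    using \<open>M \<ge> 2\<close> assms(1,3) by (intro bitmap_error_strict_mono_load) (simp_all add: power_less_one_iff)
  also have "\<dots> \<le> bitmap_error (2 ^ 32) (real (N - C))"
    using \<open>M \<ge> 2\<close> \<open>M \<le> 2 ^ 32\<close> by (intro bitmap_error_mono_size) simp_all
  also have "\<dots> = E_full"
    using assms(6) by (simp add: bitmap_error_def powr_minus_divide powr_realpow)
  finally show ?thesis .
qed

end
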